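(* Let $p$ be an odd prime, let $G$ be a quasi-powerful $p$-group and let $H=G^{p}Z(G)$. Then $H$ is strongly powerful, i.e. $[H,H]\le H^{p^{2}}$.
   Context: For an odd prime $p$, a finite $p$-group $G$ is powerful if $[G,G]\le G^{p}$, where $G^{p^k}=\langle g^{p^k}\mid g\in G\rangle$, and $G$ is quasi-powerful if $G/Z(G)$ is powerful. A finite $p$-group $X$ is strongly powerful if $[X,X]\le X^{p^{2}}$. *)

theory Defs
  imports "HOL-Algebra.Algebra"
begin

definition grp_center :: "('a, 'b) monoid_scheme \<Rightarrow> 'a set" where
  "grp_center G = {z \<in> carrier G. \<forall>g \<in> carrier G. z \<otimes>\<^bsub>G\<^esub> g = g \<otimes>\<^bsub>G\<^esub> z}"

definition pow_subgroup :: "('a, 'b) monoid_scheme \<Rightarrow> nat \<Rightarrow> 'a set" where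
  "pow_subgroup G n = generate G {g [^]\<^bsub>G\<^esub> n | g. g \<in> carrier G}"

definition p_group :: "nat \<Rightarrow> ('a, 'b) monoid_scheme \<Rightarrow> bool" where
  "p_group p G \<longleftrightarrow> group G \<and> finite (carrier G) \<and> (\<exists>k. order G = p ^ k)"

definition powerful :: "nat \<Rightarrow> ('a, 'b) monoid_scheme \<Rightarrow> bool" where
  "powerful p G \<longleftrightarrow> derived G (carrier G) \<subseteq> pow_subgroup G p"

definition quasi_powerful :: "nat \<Rightarrow> ('a, 'b) monoid_scheme \<Rightarrow> bool" where
  "quasi_powerful p G \<longleftrightarrow> powerful p (FactGroup G (grp_center G))"

definition strongly_powerful :: "nat \<Rightarrow> ('a, 'b) monoid_scheme \<Rightarrow> bool" where
  "strongly_powerful p H \<longleftrightarrow> derived H (carrier H) \<subseteq> pow_subgroup H (p ^ (2::nat))"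

end

(* Write N = G^p, Z = Z(G), H = NZ and T = H^(p^2). Central factors drop out of commutators,
   so [H,H] = [N,N], and it suffices that p-th powers commute modulo T.  In G/T the image of H
   contains all p-th powers and, G being quasi-powerful, all commutators; it has exponent
   dividing p^2 and lies in (G/T)^p Z(G/T).  In a group with such a subgroup H one shows in turn
   [H,G] <= H^p, [H^p,G] <= Z and (H^p)^p <= Z, then [x^p,y]^p = 1, and finally that x^p and y^p
   commute.  Each step expands [x^p,y] and (uv)^p by the Hall-Petrescu formula of class two
   (p is odd, so p divides p choose 2) modulo a normal subgroup W, and then discards W using
   that U <= Y[U,G] forces U <= Y for normal subgroups U, Y of a finite p-group. *)

theory Submission
  imports Defs
begin

section \<open>Commutators\<close>

definition commutator :: "('a, 'b) monoid_scheme \<Rightarrow> 'a \<Rightarrow> 'a \<Rightarrow> 'a" where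
  "commutator G a b = a \<otimes>\<^bsub>G\<^esub> b \<otimes>\<^bsub>G\<^esub> inv\<^bsub>G\<^esub> a \<otimes>\<^bsub>G\<^esub> inv\<^bsub>G\<^esub> b"

lemma choose_two_odd: "odd (n::nat) \<Longrightarrow> n choose 2 = n * ((n - 1) div 2)"
  by (auto elim!: oddE simp: choose_two)

context group
begin

lemma inv_mult_cancel_left [simp]: "x \<in> carrier G \<Longrightarrow> a \<in> carrier G \<Longrightarrow> inv x \<otimes> (x \<otimes> a) = a"
  by (simp add: m_assoc [symmetric])

lemma mult_inv_cancel_left [simp]: "x \<in> carrier G \<Longrightarrow> a \<in> carrier G \<Longrightarrow> x \<otimes> (inv x \<otimes> a) = a"
  by (simp add: m_assoc [symmetric])

lemma subgroup_nat_pow_closed: "subgroup K G \<Longrightarrow> x \<in> K \<Longrightarrow> x [^] (n::nat) \<in> K"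
  by (induction n) (simp_all add: subgroup.one_closed subgroup.m_closed)

lemma commutator_closed [simp]:
  "a \<in> carrier G \<Longrightarrow> b \<in> carrier G \<Longrightarrow> commutator G a b \<in> carrier G"
  by (simp add: commutator_def)

lemma commutator_one_left [simp]: "b \<in> carrier G \<Longrightarrow> commutator G \<one> b = \<one>"
  by (simp add: commutator_def)

lemma commutator_one_right [simp]: "a \<in> carrier G \<Longrightarrow> commutator G a \<one> = \<one>"
  by (simp add: commutator_def)

lemma inv_commutator:
  "a \<in> carrier G \<Longrightarrow> b \<in> carrier G \<Longrightarrow> inv (commutator G a b) = commutator G b a"
  by (simp add: commutator_def inv_mult_group m_assoc)

lemma commutator_eq_one_iff:
  assumes "a \<in> carrier G" "b \<in> carrier G"
  shows "commutator G a b = \<one> \<longleftrightarrow> a \<otimes> b = b \<otimes> a"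
proof -
  have "commutator G a b = (a \<otimes> b) \<otimes> inv (b \<otimes> a)"
    using assms by (simp add: commutator_def inv_mult_group m_assoc)
  then show ?thesis
    using assms by (metis inv_closed m_closed r_inv inv_equality inv_inv)
qed

lemma conj_eq_commutator_mult:
  "x \<in> carrier G \<Longrightarrow> c \<in> carrier G \<Longrightarrow> x \<otimes> c \<otimes> inv x = commutator G x c \<otimes> c"
  by (simp add: commutator_def m_assoc)

lemma commutator_mult_left:
  "a \<in> carrier G \<Longrightarrow> b \<in> carrier G \<Longrightarrow> g \<in> carrier G \<Longrightarrow>
   commutator G (a \<otimes> b) g = a \<otimes> commutator G b g \<otimes> inv a \<otimes> commutator G a g"
  by (simp add: commutator_def m_assoc inv_mult_group)

lemma commutator_inv_left:
  "a \<in> carrier G \<Longrightarrow> g \<in> carrier G \<Longrightarrow>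
   commutator G (inv a) g = inv a \<otimes> commutator G g a \<otimes> a"
  by (simp add: commutator_def m_assoc)

lemma conj_mult:
  "x \<in> carrier G \<Longrightarrow> a \<in> carrier G \<Longrightarrow> b \<in> carrier G \<Longrightarrow>
   x \<otimes> (a \<otimes> b) \<otimes> inv x = (x \<otimes> a \<otimes> inv x) \<otimes> (x \<otimes> b \<otimes> inv x)"
  by (simp add: m_assoc)

lemma conj_pow:
  assumes "x \<in> carrier G" "a \<in> carrier G"
  shows "x \<otimes> a [^] (n::nat) \<otimes> inv x = (x \<otimes> a \<otimes> inv x) [^] n"
proof (induction n)
  case (Suc n)
  have "x \<otimes> a [^] Suc n \<otimes> inv x = (x \<otimes> a [^] n \<otimes> inv x) \<otimes> (x \<otimes> a \<otimes> inv x)"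
    using assms by (simp add: m_assoc)
  then show ?case
    using Suc by simp
qed (use assms in simp)

lemma conj_commutator:
  "x \<in> carrier G \<Longrightarrow> a \<in> carrier G \<Longrightarrow> b \<in> carrier G \<Longrightarrow>
   x \<otimes> commutator G a b \<otimes> inv x = commutator G (x \<otimes> a \<otimes> inv x) (x \<otimes> b \<otimes> inv x)"
  by (simp add: commutator_def m_assoc inv_mult_group)

lemma commutator_pow_left:
  assumes x: "x \<in> carrier G" and y: "y \<in> carrier G"
    and c: "c = commutator G x y" and d: "d = commutator G x c"
    and xd: "x \<otimes> d = d \<otimes> x" and dc: "d \<otimes> c = c \<otimes> d"
  shows "commutator G (x [^] (n::nat)) y = d [^] (n choose 2) \<otimes> c [^] n"
proof (induction n)
  case 0
  have "d \<in> carrier G"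
    using c d x y by simp
  then show ?case
    using y by (simp add: numeral_2_eq_2)
next
  case (Suc n)
  have cc: "c \<in> carrier G" and dd: "d \<in> carrier G"
    using c d x y by simp_all
  have conj_d: "x \<otimes> d \<otimes> inv x = d"
    using xd x dd by (metis inv_solve_right m_closed inv_closed)
  have conj_c: "x \<otimes> c \<otimes> inv x = d \<otimes> c"
    using conj_eq_commutator_mult [OF x cc] d by simp
  have "commutator G (x [^] Suc n) y = commutator G (x \<otimes> x [^] n) y"
    using x by (simp only: nat_pow_Suc2)
  also have "\<dots> = x \<otimes> commutator G (x [^] n) y \<otimes> inv x \<otimes> c"
    using x y c by (simp add: commutator_mult_left)
  also have "\<dots> = (x \<otimes> d [^] (n choose 2) \<otimes> inv x) \<otimes> (x \<otimes> c [^] n \<otimes> inv x) \<otimes> c"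
    using Suc x dd cc by (simp add: conj_mult)
  also have "\<dots> = d [^] (n choose 2) \<otimes> (d [^] n \<otimes> c [^] n) \<otimes> c"
    using x dd cc by (simp add: conj_pow conj_d conj_c pow_mult_distrib [OF dc])
  also have "\<dots> = (d [^] (n choose 2) \<otimes> d [^] n) \<otimes> (c [^] n \<otimes> c)"
    using dd cc by (simp add: m_assoc)
  also have "\<dots> = d [^] (Suc n choose 2) \<otimes> c [^] Suc n"
    using dd cc by (simp add: nat_pow_mult numeral_2_eq_2 add.commute)
  finally show ?case .
qed

lemma commutator_pow_right:
  assumes u: "u \<in> carrier G" and v: "v \<in> carrier G"
    and vk: "v \<otimes> commutator G u v = commutator G u v \<otimes> v"
  shows "commutator G u (v [^] (n::nat)) = commutator G u v [^] n"
proof -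
  define k where "k = commutator G u v"
  have k: "k \<in> carrier G"
    using u v by (simp add: k_def)
  have "u \<otimes> v [^] n \<otimes> inv u = (k \<otimes> v) [^] n"
    using conj_pow [OF u v] conj_eq_commutator_mult [OF u v] by (simp add: k_def)
  also have "\<dots> = k [^] n \<otimes> v [^] n"
    using vk k v by (simp add: k_def pow_mult_distrib)
  finally have "commutator G u (v [^] n) = k [^] n \<otimes> v [^] n \<otimes> inv (v [^] n)"
    by (simp add: commutator_def)
  then show ?thesis
    using k v k_def by (simp add: m_assoc)
qed

lemma commutator_pow_left_commuting:
  assumes u: "u \<in> carrier G" and v: "v \<in> carrier G"
    and uk: "u \<otimes> commutator G u v = commutator G u v \<otimes> u"
  shows "commutator G (u [^] (n::nat)) v = commutator G u v [^] n"
proof -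
  have k: "commutator G u v \<in> carrier G"
    using u v by simp
  have "commutator G u (commutator G u v) = \<one>"
    using commutator_eq_one_iff [OF u k] uk by simp
  then have "commutator G (u [^] n) v = \<one> [^] (n choose 2) \<otimes> commutator G u v [^] n"
    using u k by (intro commutator_pow_left [OF u v refl]) simp_all
  then show ?thesis
    using k by simp
qed

lemma commutator_pow_eq_one:
  assumes u: "u \<in> carrier G" and v: "v \<in> carrier G"
    and vk: "v \<otimes> commutator G u v = commutator G u v \<otimes> v" and vn: "v [^] (n::nat) = \<one>"
  shows "commutator G u v [^] n = \<one>"
  using commutator_pow_right [OF u v vk, of n] u vn by simp

lemma mult_pow_eq_commutator_pow_mult:
  assumes u: "u \<in> carrier G" and v: "v \<in> carrier G"
    and vk: "v \<otimes> commutator G u v = commutator G u v \<otimes> v"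
  shows "u \<otimes> v [^] (n::nat) = commutator G u v [^] n \<otimes> v [^] n \<otimes> u"
proof -
  have "u \<otimes> v [^] n = commutator G u (v [^] n) \<otimes> v [^] n \<otimes> u"
    using u v by (simp add: commutator_def m_assoc)
  then show ?thesis
    by (simp add: commutator_pow_right [OF u v vk])
qed

lemma pow_mult_commutator:
  assumes u: "u \<in> carrier G" and v: "v \<in> carrier G"
    and uk: "u \<otimes> commutator G u v = commutator G u v \<otimes> u"
    and vk: "v \<otimes> commutator G u v = commutator G u v \<otimes> v"
  shows "(u \<otimes> v) [^] (n::nat) \<otimes> commutator G u v [^] (n choose 2) = u [^] n \<otimes> v [^] n"
proof -
  define k where "k = commutator G u v"
  have k: "k \<in> carrier G"
    using u v by (simp add: k_def)
  have ku: "k \<otimes> u = u \<otimes> k" and kv: "k \<otimes> v = v \<otimes> k"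
    using uk vk by (simp_all add: k_def)
  have "(u \<otimes> v) [^] n \<otimes> k [^] (n choose 2) = u [^] n \<otimes> v [^] n"
  proof (induction n)
    case 0
    show ?case
      using k by (simp add: numeral_2_eq_2)
  next
    case (Suc n)
    have kn: "k [^] n \<in> carrier G" and vn: "v [^] n \<in> carrier G"
      using k v by simp_all
    have kn_u: "k [^] n \<otimes> u = u \<otimes> k [^] n" and kn_v: "k [^] n \<otimes> v = v \<otimes> k [^] n"
      using group_commutes_pow [OF ku k u] group_commutes_pow [OF kv k v] by simp_all
    have kn_vn: "k [^] n \<otimes> v [^] n = v [^] n \<otimes> k [^] n"
      using group_commutes_pow [OF kn_v [symmetric] v kn] by simp
    have kc_uv: "k [^] (n choose 2) \<otimes> (u \<otimes> v) = u \<otimes> v \<otimes> k [^] (n choose 2)"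
      using group_commutes_pow [OF ku k u, of "n choose 2"] group_commutes_pow [OF kv k v, of "n choose 2"]
        u v k by (simp add: m_assoc [symmetric]) (simp add: m_assoc)
    have u_vn: "u \<otimes> v [^] n = k [^] n \<otimes> v [^] n \<otimes> u"
      unfolding k_def by (rule mult_pow_eq_commutator_pow_mult [OF u v vk])
    have "(u \<otimes> v) [^] Suc n \<otimes> k [^] (Suc n choose 2)
        = (u \<otimes> v) [^] n \<otimes> (u \<otimes> v \<otimes> k [^] (n choose 2)) \<otimes> k [^] n"
      using u v k nat_pow_mult [OF k, of n "n choose 2"] nat_pow_mult [OF k, of "n choose 2" n]
      by (simp add: numeral_2_eq_2 add.commute nat_pow_mult [symmetric] m_assoc)
    also have "\<dots> = ((u \<otimes> v) [^] n \<otimes> k [^] (n choose 2)) \<otimes> u \<otimes> (v \<otimes> k [^] n)"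
      using u v k by (simp only: kc_uv [symmetric]) (simp add: m_assoc)
    also have "\<dots> = u [^] n \<otimes> v [^] n \<otimes> u \<otimes> (v \<otimes> k [^] n)"
      by (simp only: Suc)
    also have "\<dots> = u [^] n \<otimes> (k [^] n \<otimes> v [^] n \<otimes> u) \<otimes> v"
      using u v vn kn kn_v kn_vn kn_u by (simp add: m_assoc)
    also have "\<dots> = u [^] Suc n \<otimes> v [^] Suc n"
      using u v vn by (simp add: u_vn [symmetric] m_assoc nat_pow_Suc2)
    finally show ?case .
  qed
  then show ?thesis
    by (simp add: k_def)
qed

lemma pow_mult_eq_one:
  assumes u: "u \<in> carrier G" and v: "v \<in> carrier G"
    and uk: "u \<otimes> commutator G u v = commutator G u v \<otimes> u"
    and vk: "v \<otimes> commutator G u v = commutator G u v \<otimes> v"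
    and n: "odd n" and un: "u [^] (n::nat) = \<one>" and vn: "v [^] n = \<one>"
  shows "(u \<otimes> v) [^] n = \<one>"
proof -
  have k: "commutator G u v \<in> carrier G"
    using u v by simp
  have "commutator G u v [^] n = \<one>"
    using commutator_pow_left_commuting [OF u v uk, of n] un v by simp
  then have "commutator G u v [^] (n choose 2) = \<one>"
    using k by (simp add: choose_two_odd [OF n] nat_pow_pow [symmetric])
  then show ?thesis
    using pow_mult_commutator [OF u v uk vk, of n] u v un vn by simp
qed

end

section \<open>Quotient groups\<close>

(* Keeps the unit and product of G Mod H abstract, so that group lemmas instantiated at
   G Mod H remain applicable. *)
declare one_FactGroup [simp del] mult_FactGroup [simp del]

context normal
begin

lemma quotient_group_hom: "group_hom G (G Mod H) (\<lambda>a. H #> a)"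
  by (simp add: group_hom_def group_hom_axioms_def factorgroup_is_group r_coset_hom_Mod)

lemma r_coset_eq_self_iff: "a \<in> carrier G \<Longrightarrow> H #> a = H \<longleftrightarrow> a \<in> H"
  by (meson coset_join1 coset_join2 subgroup_axioms)

lemma r_coset_pow_eq_one_iff:
  assumes "a \<in> carrier G"
  shows "(H #> a) [^]\<^bsub>G Mod H\<^esub> (n::nat) = \<one>\<^bsub>G Mod H\<^esub> \<longleftrightarrow> a [^] n \<in> H"
proof -
  interpret Q: group_hom G "G Mod H" "\<lambda>a. H #> a"
    by (rule quotient_group_hom)
  show ?thesis
    using assms r_coset_eq_self_iff [of "a [^] n"] by (simp add: Q.hom_nat_pow [symmetric] one_FactGroup)
qed

lemma r_coset_eq_imp_mult_inv_mem:
  assumes a: "a \<in> carrier G" and b: "b \<in> carrier G" and eq: "H #> a = H #> b"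
  shows "a \<otimes> inv b \<in> H"
proof -
  interpret Q: group_hom G "G Mod H" "\<lambda>a. H #> a"
    by (rule quotient_group_hom)
  have "H #> (a \<otimes> inv b) = (H #> a) \<otimes>\<^bsub>G Mod H\<^esub> inv\<^bsub>G Mod H\<^esub> (H #> b)"
    using a b by simp
  also have "\<dots> = H"
    using b eq by (simp add: one_FactGroup)
  finally have "H #> (a \<otimes> inv b) = H" .
  moreover have "a \<otimes> inv b \<in> carrier G"
    using a b by simp
  ultimately show ?thesis
    using r_coset_eq_self_iff by blast
qed

lemma r_coset_commutator:
  assumes "a \<in> carrier G" "b \<in> carrier G"
  shows "H #> commutator G a b = commutator (G Mod H) (H #> a) (H #> b)"
proof -
  interpret Q: group_hom G "G Mod H" "\<lambda>a. H #> a"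
    by (rule quotient_group_hom)
  show ?thesis
    using assms unfolding commutator_def by (simp only: Q.hom_mult Q.hom_inv inv_closed m_closed)
qed

lemma r_coset_commute_iff:
  assumes a: "a \<in> carrier G" and b: "b \<in> carrier G"
  shows "(H #> a) \<otimes>\<^bsub>G Mod H\<^esub> (H #> b) = (H #> b) \<otimes>\<^bsub>G Mod H\<^esub> (H #> a)
    \<longleftrightarrow> commutator G a b \<in> H"
proof -
  interpret Q: group_hom G "G Mod H" "\<lambda>a. H #> a"
    by (rule quotient_group_hom)
  have "(H #> a) \<otimes>\<^bsub>G Mod H\<^esub> (H #> b) = (H #> b) \<otimes>\<^bsub>G Mod H\<^esub> (H #> a)
      \<longleftrightarrow> commutator (G Mod H) (H #> a) (H #> b) = \<one>\<^bsub>G Mod H\<^esub>"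
    using Q.H.commutator_eq_one_iff a b by simp
  also have "\<dots> \<longleftrightarrow> H #> commutator G a b = H"
    using r_coset_commutator [OF a b] by (simp add: one_FactGroup)
  also have "\<dots> \<longleftrightarrow> commutator G a b \<in> H"
    using r_coset_eq_self_iff a b by simp
  finally show ?thesis .
qed

lemma commutator_pow_left_mod:
  assumes x: "x \<in> carrier G" and y: "y \<in> carrier G"
    and c: "c = commutator G x y" and d: "d = commutator G x c"
    and xd: "commutator G x d \<in> H" and dc: "commutator G d c \<in> H"
  shows "commutator G (x [^] (n::nat)) y \<otimes> inv (d [^] (n choose 2) \<otimes> c [^] n) \<in> H"
proof -
  interpret Q: group_hom G "G Mod H" "\<lambda>a. H #> a"
    by (rule quotient_group_hom)
  have cc: "c \<in> carrier G" and dd: "d \<in> carrier G"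
    using x y c d by simp_all
  have "commutator (G Mod H) ((H #> x) [^]\<^bsub>G Mod H\<^esub> n) (H #> y)
      = (H #> d) [^]\<^bsub>G Mod H\<^esub> (n choose 2) \<otimes>\<^bsub>G Mod H\<^esub> (H #> c) [^]\<^bsub>G Mod H\<^esub> n"
  proof (rule Q.H.commutator_pow_left)
    show "H #> c = commutator (G Mod H) (H #> x) (H #> y)"
      using r_coset_commutator [OF x y] c by simp
    show "H #> d = commutator (G Mod H) (H #> x) (H #> c)"
      using r_coset_commutator [OF x cc] d by simp
    show "(H #> x) \<otimes>\<^bsub>G Mod H\<^esub> (H #> d) = (H #> d) \<otimes>\<^bsub>G Mod H\<^esub> (H #> x)"
      using r_coset_commute_iff [OF x dd] xd by simp
    show "(H #> d) \<otimes>\<^bsub>G Mod H\<^esub> (H #> c) = (H #> c) \<otimes>\<^bsub>G Mod H\<^esub> (H #> d)"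
      using r_coset_commute_iff [OF dd cc] dc by simp
  qed (use x y in simp_all)
  then have "H #> commutator G (x [^] n) y = H #> (d [^] (n choose 2) \<otimes> c [^] n)"
    using x y cc dd r_coset_commutator [of "x [^] n" y]
    by (simp only: Q.hom_nat_pow Q.hom_mult nat_pow_closed)
  then show ?thesis
    using x y cc dd by (simp add: r_coset_eq_imp_mult_inv_mem)
qed

lemma commutator_pow_left_mem:
  assumes x: "x \<in> carrier G" and y: "y \<in> carrier G"
    and c: "c = commutator G x y" and d: "d = commutator G x c"
    and xd: "commutator G x d \<in> H" and dc: "commutator G d c \<in> H"
    and n: "odd n" and dn: "d [^] n \<in> H" and cn: "c [^] n \<in> H"
  shows "commutator G (x [^] (n::nat)) y \<in> H"
proof -
  have cc: "c \<in> carrier G" and dd: "d \<in> carrier G"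
    using x y c d by simp_all
  have "d [^] (n choose 2) = (d [^] n) [^] ((n - 1) div 2)"
    using choose_two_odd [OF n] dd by (simp add: nat_pow_pow)
  then have "d [^] (n choose 2) \<otimes> c [^] n \<in> H"
    using dn cn subgroup_nat_pow_closed [OF subgroup_axioms] by simp
  moreover have "commutator G (x [^] n) y \<otimes> inv (d [^] (n choose 2) \<otimes> c [^] n) \<in> H"
    by (rule commutator_pow_left_mod [OF x y c d xd dc])
  ultimately have "(commutator G (x [^] n) y \<otimes> inv (d [^] (n choose 2) \<otimes> c [^] n))
      \<otimes> (d [^] (n choose 2) \<otimes> c [^] n) \<in> H"
    by simp
  then show ?thesis
    using x y cc dd by (simp add: m_assoc)
qed

lemma commutator_pow_right_mem:
  assumes u: "u \<in> carrier G" and v: "v \<in> carrier G"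
    and vk: "commutator G v (commutator G u v) \<in> H" and vn: "v [^] (n::nat) \<in> H"
  shows "commutator G u v [^] n \<in> H"
proof -
  interpret Q: group_hom G "G Mod H" "\<lambda>a. H #> a"
    by (rule quotient_group_hom)
  have k: "commutator G u v \<in> carrier G"
    using u v by simp
  have "commutator (G Mod H) (H #> u) (H #> v) [^]\<^bsub>G Mod H\<^esub> n = \<one>\<^bsub>G Mod H\<^esub>"
  proof (rule Q.H.commutator_pow_eq_one)
    show "(H #> v) \<otimes>\<^bsub>G Mod H\<^esub> commutator (G Mod H) (H #> u) (H #> v)
        = commutator (G Mod H) (H #> u) (H #> v) \<otimes>\<^bsub>G Mod H\<^esub> (H #> v)"
      using r_coset_commute_iff [OF v k] vk r_coset_commutator [OF u v] by simp
    show "(H #> v) [^]\<^bsub>G Mod H\<^esub> n = \<one>\<^bsub>G Mod H\<^esub>"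
      using r_coset_pow_eq_one_iff [OF v] vn by simp
  qed (use u v in simp_all)
  then show ?thesis
    using r_coset_pow_eq_one_iff [OF k] r_coset_commutator [OF u v] by simp
qed

lemma pow_mult_mem:
  assumes u: "u \<in> carrier G" and v: "v \<in> carrier G"
    and uk: "commutator G u (commutator G u v) \<in> H"
    and vk: "commutator G v (commutator G u v) \<in> H"
    and n: "odd n" and un: "u [^] (n::nat) \<in> H" and vn: "v [^] n \<in> H"
  shows "(u \<otimes> v) [^] n \<in> H"
proof -
  interpret Q: group_hom G "G Mod H" "\<lambda>a. H #> a"
    by (rule quotient_group_hom)
  have k: "commutator G u v \<in> carrier G"
    using u v by simp
  have "((H #> u) \<otimes>\<^bsub>G Mod H\<^esub> (H #> v)) [^]\<^bsub>G Mod H\<^esub> n = \<one>\<^bsub>G Mod H\<^esub>"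
  proof (rule Q.H.pow_mult_eq_one [OF _ _ _ _ n])
    show "(H #> u) \<otimes>\<^bsub>G Mod H\<^esub> commutator (G Mod H) (H #> u) (H #> v)
        = commutator (G Mod H) (H #> u) (H #> v) \<otimes>\<^bsub>G Mod H\<^esub> (H #> u)"
      using r_coset_commute_iff [OF u k] uk r_coset_commutator [OF u v] by simp
    show "(H #> v) \<otimes>\<^bsub>G Mod H\<^esub> commutator (G Mod H) (H #> u) (H #> v)
        = commutator (G Mod H) (H #> u) (H #> v) \<otimes>\<^bsub>G Mod H\<^esub> (H #> v)"
      using r_coset_commute_iff [OF v k] vk r_coset_commutator [OF u v] by simp
    show "(H #> u) [^]\<^bsub>G Mod H\<^esub> n = \<one>\<^bsub>G Mod H\<^esub>" "(H #> v) [^]\<^bsub>G Mod H\<^esub> n = \<one>\<^bsub>G Mod H\<^esub>"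
      using r_coset_pow_eq_one_iff u v un vn by simp_all
  qed (use u v in simp_all)
  then have "(H #> (u \<otimes> v)) [^]\<^bsub>G Mod H\<^esub> n = \<one>\<^bsub>G Mod H\<^esub>"
    by (simp only: Q.hom_mult [OF u v])
  then show ?thesis
    by (simp only: r_coset_pow_eq_one_iff [OF m_closed [OF u v]])
qed

end

section \<open>Centralizers and the subgroups \<open>[S, G]\<close>\<close>

definition centralizer :: "('a, 'b) monoid_scheme \<Rightarrow> 'a set \<Rightarrow> 'a set" where
  "centralizer G T = {a \<in> carrier G. \<forall>t\<in>T. a \<otimes>\<^bsub>G\<^esub> t = t \<otimes>\<^bsub>G\<^esub> a}"

definition pow_set :: "('a, 'b) monoid_scheme \<Rightarrow> 'a set \<Rightarrow> nat \<Rightarrow> 'a set" where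
  "pow_set G S n = {x [^]\<^bsub>G\<^esub> n | x. x \<in> S}"

definition comm_subgroup :: "('a, 'b) monoid_scheme \<Rightarrow> 'a set \<Rightarrow> 'a set" where
  "comm_subgroup G S = generate G {commutator G x g | x g. x \<in> S \<and> g \<in> carrier G}"

definition central_mod :: "('a, 'b) monoid_scheme \<Rightarrow> 'a set \<Rightarrow> 'a set" where
  "central_mod G W = {a \<in> carrier G. \<forall>g\<in>carrier G. commutator G a g \<in> W}"

lemma grp_center_eq_centralizer: "grp_center G = centralizer G (carrier G)"
  unfolding grp_center_def centralizer_def ..

lemma pow_subgroup_eq_generate_pow_set: "pow_subgroup G n = generate G (pow_set G (carrier G) n)"
  unfolding pow_subgroup_def pow_set_def ..

lemma pow_setE:
  assumes "a \<in> pow_set G S n"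
  obtains x where "x \<in> S" "a = x [^]\<^bsub>G\<^esub> n"
  using assms unfolding pow_set_def by blast

lemma pow_set_eq_image: "pow_set G S n = (\<lambda>x. x [^]\<^bsub>G\<^esub> n) ` S"
  unfolding pow_set_def by blast

context group
begin

lemma centralizer_subgroup:
  assumes T: "T \<subseteq> carrier G"
  shows "subgroup (centralizer G T) G"
proof (rule subgroupI)
  fix a
  assume "a \<in> centralizer G T"
  then have a: "a \<in> carrier G" and at: "\<And>t. t \<in> T \<Longrightarrow> a \<otimes> t = t \<otimes> a"
    by (auto simp: centralizer_def)
  have "inv a \<otimes> t = t \<otimes> inv a" if t: "t \<in> T" for t
  proof -
    have "inv a \<otimes> (a \<otimes> t) \<otimes> inv a = inv a \<otimes> (t \<otimes> a) \<otimes> inv a"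
      using at [OF t] by simp
    then show ?thesis
      using a t T by (auto simp: m_assoc)
  qed
  then show "inv a \<in> centralizer G T"
    using a by (simp add: centralizer_def)
next
  fix a b
  assume "a \<in> centralizer G T" "b \<in> centralizer G T"
  then have a: "a \<in> carrier G" and at: "\<And>t. t \<in> T \<Longrightarrow> a \<otimes> t = t \<otimes> a"
    and b: "b \<in> carrier G" and bt: "\<And>t. t \<in> T \<Longrightarrow> b \<otimes> t = t \<otimes> b"
    by (auto simp: centralizer_def)
  have "a \<otimes> b \<otimes> t = t \<otimes> (a \<otimes> b)" if t: "t \<in> T" for t
  proof -
    have tc: "t \<in> carrier G"
      using t T by blast
    have "a \<otimes> b \<otimes> t = a \<otimes> t \<otimes> b"
      using a b tc bt [OF t] by (simp add: m_assoc)
    also have "\<dots> = t \<otimes> (a \<otimes> b)"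
      using a b tc at [OF t] by (simp add: m_assoc)
    finally show ?thesis .
  qed
  then show "a \<otimes> b \<in> centralizer G T"
    using a b by (simp add: centralizer_def)
next
  show "centralizer G T \<subseteq> carrier G"
    by (auto simp: centralizer_def)
  have "\<one> \<in> centralizer G T"
    using T by (auto simp: centralizer_def)
  then show "centralizer G T \<noteq> {}"
    by blast
qed

lemma generate_commute:
  assumes S: "S \<subseteq> carrier G" and comm: "\<And>a b. a \<in> S \<Longrightarrow> b \<in> S \<Longrightarrow> a \<otimes> b = b \<otimes> a"
    and a: "a \<in> generate G S" and b: "b \<in> generate G S"
  shows "a \<otimes> b = b \<otimes> a"
proof -
  have "generate G S \<subseteq> centralizer G S"
    using S comm by (intro generate_subgroup_incl centralizer_subgroup) (auto simp: centralizer_def)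
  then have "S \<subseteq> centralizer G (generate G S)"
    using S by (auto simp: centralizer_def)
  then have "generate G S \<subseteq> centralizer G (generate G S)"
    by (intro generate_subgroup_incl centralizer_subgroup generate_incl S)
  then show ?thesis
    using a b by (auto simp: centralizer_def)
qed

lemma grp_center_closed: "z \<in> grp_center G \<Longrightarrow> z \<in> carrier G"
  by (simp add: grp_center_def)

lemma grp_center_commute: "z \<in> grp_center G \<Longrightarrow> g \<in> carrier G \<Longrightarrow> z \<otimes> g = g \<otimes> z"
  by (simp add: grp_center_def)

lemma grp_center_subgroup: "subgroup (grp_center G) G"
  unfolding grp_center_eq_centralizer by (rule centralizer_subgroup) simp

lemma conj_grp_center: "g \<in> carrier G \<Longrightarrow> z \<in> grp_center G \<Longrightarrow> g \<otimes> z \<otimes> inv g = z"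
  by (metis grp_center_closed grp_center_commute inv_closed m_assoc r_inv r_one)

lemma grp_center_normal: "grp_center G \<lhd> G"
  using grp_center_subgroup by (auto simp: normal_inv_iff conj_grp_center)

lemma commutator_center_left: "z \<in> grp_center G \<Longrightarrow> g \<in> carrier G \<Longrightarrow> commutator G z g = \<one>"
  by (simp add: commutator_eq_one_iff grp_center_closed grp_center_commute)

lemma commutator_center_right: "z \<in> grp_center G \<Longrightarrow> g \<in> carrier G \<Longrightarrow> commutator G g z = \<one>"
  by (simp add: commutator_eq_one_iff grp_center_closed grp_center_commute)

lemma commutator_mult_center_left:
  "a \<in> carrier G \<Longrightarrow> z \<in> grp_center G \<Longrightarrow> g \<in> carrier G \<Longrightarrow>
   commutator G (a \<otimes> z) g = commutator G a g"
  by (simp add: commutator_mult_left grp_center_closed commutator_center_left m_assoc)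

lemma center_pow_eq_one_normal: "{z \<in> grp_center G. z [^] (n::nat) = \<one>} \<lhd> G"
proof -
  have "subgroup {z \<in> grp_center G. z [^] n = \<one>} G"
  proof (rule subgroupI)
    fix a
    assume "a \<in> {z \<in> grp_center G. z [^] n = \<one>}"
    then show "inv a \<in> {z \<in> grp_center G. z [^] n = \<one>}"
      using grp_center_subgroup by (simp add: grp_center_closed nat_pow_inv subgroup.m_inv_closed)
  next
    fix a b
    assume "a \<in> {z \<in> grp_center G. z [^] n = \<one>}" "b \<in> {z \<in> grp_center G. z [^] n = \<one>}"
    then have a: "a \<in> grp_center G" "a [^] n = \<one>" and b: "b \<in> grp_center G" "b [^] n = \<one>"
      by auto
    have "(a \<otimes> b) [^] n = a [^] n \<otimes> b [^] n"
      using a b by (intro pow_mult_distrib grp_center_commute grp_center_closed)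
    then show "a \<otimes> b \<in> {z \<in> grp_center G. z [^] n = \<one>}"
      using a b subgroup.m_closed [OF grp_center_subgroup] by simp
  next
    show "{z \<in> grp_center G. z [^] n = \<one>} \<subseteq> carrier G"
      by (auto simp: grp_center_closed)
    have "\<one> \<in> {z \<in> grp_center G. z [^] n = \<one>}"
      using subgroup.one_closed [OF grp_center_subgroup] by simp
    then show "{z \<in> grp_center G. z [^] n = \<one>} \<noteq> {}"
      by blast
  qed
  then show ?thesis
    by (auto simp: normal_inv_iff conj_grp_center)
qed

lemma subset_set_mult_left:
  assumes "subgroup B G" "A \<subseteq> carrier G"
  shows "A \<subseteq> A <#> B"
proof
  fix a
  assume a: "a \<in> A"
  then have "a \<otimes> \<one> \<in> A <#> B"
    using subgroup.one_closed [OF assms(1)] unfolding set_mult_def by blast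
  then show "a \<in> A <#> B"
    using a assms(2) by auto
qed

lemma subset_set_mult_right:
  assumes "subgroup A G" "B \<subseteq> carrier G"
  shows "B \<subseteq> A <#> B"
proof
  fix b
  assume b: "b \<in> B"
  then have "\<one> \<otimes> b \<in> A <#> B"
    using subgroup.one_closed [OF assms(1)] unfolding set_mult_def by blast
  then show "b \<in> A <#> B"
    using b assms(2) by auto
qed

lemma generate_pow_set_normal:
  assumes N: "N \<lhd> G"
  shows "generate G (pow_set G N n) \<lhd> G"
proof -
  interpret normal N G
    by (rule N)
  have "g \<otimes> x [^] n \<otimes> inv g \<in> pow_set G N n" if "g \<in> carrier G" "x \<in> N" for g x
    using that conj_pow [of g x n] inv_op_closed2 unfolding pow_set_def by auto
  then show ?thesis
    unfolding pow_set_def by (intro normal_generateI) auto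
qed

lemma comm_subgroup_normal:
  assumes N: "N \<lhd> G"
  shows "comm_subgroup G N \<lhd> G"
proof -
  interpret normal N G
    by (rule N)
  let ?C = "{commutator G x g | x g. x \<in> N \<and> g \<in> carrier G}"
  have "h \<otimes> c \<otimes> inv h \<in> ?C" if c: "c \<in> ?C" and h: "h \<in> carrier G" for c h
  proof -
    obtain x g where x: "x \<in> N" and g: "g \<in> carrier G" and cx: "c = commutator G x g"
      using c by blast
    have "h \<otimes> c \<otimes> inv h = commutator G (h \<otimes> x \<otimes> inv h) (h \<otimes> g \<otimes> inv h)"
      using cx h g x by (simp add: conj_commutator)
    moreover have "h \<otimes> x \<otimes> inv h \<in> N" "h \<otimes> g \<otimes> inv h \<in> carrier G"
      using h x g by (simp_all add: inv_op_closed2)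
    ultimately show ?thesis
      by blast
  qed
  moreover have "?C \<subseteq> carrier G"
    by (auto dest: mem_carrier)
  ultimately show ?thesis
    unfolding comm_subgroup_def by (intro normal_generateI) blast+
qed

lemma commutator_mem_comm_subgroup:
  "x \<in> S \<Longrightarrow> g \<in> carrier G \<Longrightarrow> commutator G x g \<in> comm_subgroup G S"
  unfolding comm_subgroup_def by (rule generate.incl) blast

lemma commutator_mem_comm_subgroup':
  assumes "S \<subseteq> carrier G" "x \<in> S" "g \<in> carrier G"
  shows "commutator G g x \<in> comm_subgroup G S"
proof -
  have "{commutator G x g | x g. x \<in> S \<and> g \<in> carrier G} \<subseteq> carrier G"
    using assms(1) by auto
  then have "inv (commutator G x g) \<in> comm_subgroup G S"
    using commutator_mem_comm_subgroup [OF assms(2,3)] generate_m_inv_closed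
    unfolding comm_subgroup_def by blast
  then show ?thesis
    using assms by (auto simp: inv_commutator)
qed

lemma comm_subgroup_subsetI:
  "subgroup K G \<Longrightarrow> (\<And>x g. x \<in> S \<Longrightarrow> g \<in> carrier G \<Longrightarrow> commutator G x g \<in> K) \<Longrightarrow>
   comm_subgroup G S \<subseteq> K"
  unfolding comm_subgroup_def by (rule generate_subgroup_incl) auto

lemma normal_commutator_mem: "W \<lhd> G \<Longrightarrow> w \<in> W \<Longrightarrow> g \<in> carrier G \<Longrightarrow> commutator G w g \<in> W"
proof -
  assume W: "W \<lhd> G" and w: "w \<in> W" and g: "g \<in> carrier G"
  interpret normal W G
    by (rule W)
  have "w \<otimes> (g \<otimes> inv w \<otimes> inv g) \<in> W"
    using w g by (simp add: inv_op_closed2)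
  then show ?thesis
    using w g by (simp add: commutator_def m_assoc)
qed

lemma central_mod_subgroup:
  assumes W: "W \<lhd> G"
  shows "subgroup (central_mod G W) G"
proof -
  interpret normal W G
    by (rule W)
  show ?thesis
  proof (rule subgroupI)
    fix a
    assume "a \<in> central_mod G W"
    then have a: "a \<in> carrier G" and aw: "\<And>g. g \<in> carrier G \<Longrightarrow> commutator G a g \<in> W"
      by (auto simp: central_mod_def)
    have "commutator G (inv a) g \<in> W" if g: "g \<in> carrier G" for g
    proof -
      have "commutator G g a \<in> W"
        using m_inv_closed [OF aw [OF g]] inv_commutator [OF a g] by simp
      then show ?thesis
        using inv_op_closed2 [of "inv a"] a g by (simp add: commutator_inv_left)
    qed
    then show "inv a \<in> central_mod G W"
      using a by (simp add: central_mod_def)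
  next
    fix a b
    assume "a \<in> central_mod G W" "b \<in> central_mod G W"
    then have a: "a \<in> carrier G" and aw: "\<And>g. g \<in> carrier G \<Longrightarrow> commutator G a g \<in> W"
      and b: "b \<in> carrier G" and bw: "\<And>g. g \<in> carrier G \<Longrightarrow> commutator G b g \<in> W"
      by (auto simp: central_mod_def)
    have "commutator G (a \<otimes> b) g \<in> W" if g: "g \<in> carrier G" for g
      using a b g aw bw inv_op_closed2 by (simp add: commutator_mult_left)
    then show "a \<otimes> b \<in> central_mod G W"
      using a b by (simp add: central_mod_def)
  next
    show "central_mod G W \<subseteq> carrier G"
      unfolding central_mod_def by blast
    have "\<one> \<in> central_mod G W"
      by (simp add: central_mod_def)
    then show "central_mod G W \<noteq> {}"
      by blast
  qed
qed

lemma central_mod_normal: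
  assumes W: "W \<lhd> G"
  shows "central_mod G W \<lhd> G"
proof -
  interpret normal W G
    by (rule W)
  have "h \<otimes> a \<otimes> inv h \<in> central_mod G W" if h: "h \<in> carrier G" and a: "a \<in> central_mod G W" for h a
  proof -
    have ac: "a \<in> carrier G" and aw: "\<And>g. g \<in> carrier G \<Longrightarrow> commutator G a g \<in> W"
      using a by (auto simp: central_mod_def)
    have "commutator G (h \<otimes> a \<otimes> inv h) g \<in> W" if g: "g \<in> carrier G" for g
    proof -
      have g': "inv h \<otimes> g \<otimes> h \<in> carrier G"
        using g h by simp
      have "h \<otimes> commutator G a (inv h \<otimes> g \<otimes> h) \<otimes> inv h \<in> W"
        using inv_op_closed2 [OF h aw [OF g']] .
      moreover have "h \<otimes> (inv h \<otimes> g \<otimes> h) \<otimes> inv h = g"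
        using h g by (simp add: m_assoc)
      ultimately show ?thesis
        using conj_commutator [OF h ac g'] by simp
    qed
    then show ?thesis
      using h ac by (simp add: central_mod_def)
  qed
  then show ?thesis
    by (rule normal_invI [OF central_mod_subgroup [OF W]])
qed

lemma normal_subset_central_mod:
  assumes W: "W \<lhd> G"
  shows "W \<subseteq> central_mod G W"
proof
  fix w
  assume w: "w \<in> W"
  then have "w \<in> carrier G"
    by (rule subgroup.mem_carrier [OF normal_imp_subgroup [OF W]])
  then show "w \<in> central_mod G W"
    using normal_commutator_mem [OF W w] by (simp add: central_mod_def)
qed

lemma mult_comm_subgroup_normal: "Y \<lhd> G \<Longrightarrow> S \<lhd> G \<Longrightarrow> Y <#> comm_subgroup G S \<lhd> G"
  by (intro normal_subgroup_set_mult_closed comm_subgroup_normal)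

lemma subset_mult_comm_subgroup:
  assumes "subgroup Y G" "S \<lhd> G"
  shows "Y \<subseteq> Y <#> comm_subgroup G S" "comm_subgroup G S \<subseteq> Y <#> comm_subgroup G S"
proof -
  have C: "subgroup (comm_subgroup G S) G"
    by (rule normal_imp_subgroup [OF comm_subgroup_normal [OF assms(2)]])
  show "Y \<subseteq> Y <#> comm_subgroup G S"
    by (rule subset_set_mult_left [OF C subgroup.subset [OF assms(1)]])
  show "comm_subgroup G S \<subseteq> Y <#> comm_subgroup G S"
    by (rule subset_set_mult_right [OF assms(1) subgroup.subset [OF C]])
qed

lemma pow_subgroup_normal: "pow_subgroup G n \<lhd> G"
  unfolding pow_subgroup_eq_generate_pow_set by (rule generate_pow_set_normal [OF normal_self])

lemma pow_subgroup_mult_center_normal: "pow_subgroup G n <#> grp_center G \<lhd> G"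
  by (rule normal_subgroup_set_mult_closed [OF pow_subgroup_normal grp_center_normal])

lemma pow_subgroup_subset_mult_center: "pow_subgroup G n \<subseteq> pow_subgroup G n <#> grp_center G"
  by (rule subset_set_mult_left [OF grp_center_subgroup subgroup.subset [OF normal_imp_subgroup [OF pow_subgroup_normal]]])

lemma pow_mem_pow_subgroup: "g \<in> carrier G \<Longrightarrow> g [^] n \<in> pow_subgroup G n"
  unfolding pow_subgroup_def by (rule generate.incl) blast

end

section \<open>Finite \<open>p\<close>-groups\<close>

lemma prime_power_dvd_cases:
  fixes p :: nat
  assumes "Factorial_Ring.prime p" "d dvd p ^ k"
  shows "d = 1 \<or> p dvd d"
proof -
  obtain i where "d = p ^ i"
    using divides_primepow_nat [OF assms(1)] assms(2) by blast
  then show ?thesis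
    by (cases i) auto
qed

context group
begin

lemma p_group_FactGroup:
  assumes G: "p_group p G" and p: "Factorial_Ring.prime p" and N: "N \<lhd> G"
  shows "p_group p (G Mod N)"
proof -
  interpret normal N G
    by (rule N)
  obtain k where k: "order G = p ^ k" and fin: "finite (carrier G)"
    using G unfolding p_group_def by blast
  have "card (rcosets N) dvd p ^ k"
    unfolding k [symmetric] lagrange [OF subgroup_axioms, symmetric] by simp
  then obtain i where "card (rcosets N) = p ^ i"
    using divides_primepow_nat [OF p] by blast
  then have "order (G Mod N) = p ^ i"
    by (simp add: order_def FactGroup_def)
  moreover have "finite (carrier (G Mod N))"
    using fin by (simp add: carrier_FactGroup)
  ultimately show ?thesis
    unfolding p_group_def using factorgroup_is_group by blast
qed

lemma p_group_prime_dvd_card_subgroup: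
  assumes G: "p_group p G" and p: "Factorial_Ring.prime p" and A: "subgroup A G" and ne: "A \<noteq> {\<one>}"
  shows "p dvd card A"
proof -
  obtain k where k: "order G = p ^ k"
    using G unfolding p_group_def by blast
  have "card A dvd p ^ k"
    unfolding k [symmetric] lagrange [OF A, symmetric] by simp
  then have "card A = 1 \<or> p dvd card A"
    by (rule prime_power_dvd_cases [OF p])
  moreover have "card A \<noteq> 1"
  proof
    assume "card A = 1"
    then obtain a where "A = {a}"
      by (rule card_1_singletonE)
    then show False
      using ne subgroup.one_closed [OF A] by simp
  qed
  ultimately show ?thesis
    by simp
qed

lemma orbit_conjugation:
  "x \<in> carrier G \<Longrightarrow>
   orbit G (\<lambda>g. \<lambda>h \<in> carrier G. g \<otimes> h \<otimes> inv g) x = {g \<otimes> x \<otimes> inv g | g. g \<in> carrier G}"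
  unfolding orbit_def by auto

lemma p_group_prime_dvd_card_conj_orbit:
  assumes G: "p_group p G" and p: "Factorial_Ring.prime p" and x: "x \<in> carrier G" and nc: "x \<notin> grp_center G"
  shows "p dvd card (orbit G (\<lambda>g. \<lambda>h \<in> carrier G. g \<otimes> h \<otimes> inv g) x)"
proof -
  let ?\<phi> = "\<lambda>g. \<lambda>h \<in> carrier G. g \<otimes> h \<otimes> inv g"
  interpret group_action G "carrier G" ?\<phi>
    by (rule action_by_conjugation)
  obtain k where k: "order G = p ^ k"
    using G unfolding p_group_def by blast
  have "card (orbit G ?\<phi> x) dvd p ^ k"
    unfolding k [symmetric] orbit_stabilizer_theorem [OF x, symmetric] by simp
  then have "card (orbit G ?\<phi> x) = 1 \<or> p dvd card (orbit G ?\<phi> x)"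
    by (rule prime_power_dvd_cases [OF p])
  moreover have "card (orbit G ?\<phi> x) \<noteq> 1"
  proof
    assume "card (orbit G ?\<phi> x) = 1"
    then obtain y where "orbit G ?\<phi> x = {y}"
      by (rule card_1_singletonE)
    then have orbit: "orbit G ?\<phi> x = {x}"
      using orbit_refl [OF x] by simp
    have "x \<otimes> g = g \<otimes> x" if g: "g \<in> carrier G" for g
    proof -
      have "g \<otimes> x \<otimes> inv g \<in> orbit G ?\<phi> x"
        using g x by (auto simp: orbit_conjugation)
      then have "g \<otimes> x \<otimes> inv g \<otimes> g = x \<otimes> g"
        using orbit by simp
      then show ?thesis
        using g x by (simp add: m_assoc)
    qed
    then show False
      using nc x by (simp add: grp_center_def)
  qed
  ultimately show ?thesis
    by simp
qed

lemma orbit_conjugation_conj_closed: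
  assumes conj: "\<And>g x. g \<in> carrier G \<Longrightarrow> x \<in> B \<Longrightarrow> g \<otimes> x \<otimes> inv g \<in> B" and x: "x \<in> carrier G"
  shows "x \<in> B \<Longrightarrow> orbit G (\<lambda>g. \<lambda>h \<in> carrier G. g \<otimes> h \<otimes> inv g) x \<subseteq> B"
    and "x \<notin> B \<Longrightarrow> orbit G (\<lambda>g. \<lambda>h \<in> carrier G. g \<otimes> h \<otimes> inv g) x \<inter> B = {}"
proof -
  show "x \<in> B \<Longrightarrow> orbit G (\<lambda>g. \<lambda>h \<in> carrier G. g \<otimes> h \<otimes> inv g) x \<subseteq> B"
    using conj by (auto simp: orbit_conjugation [OF x])
  have "x \<in> B" if g: "g \<in> carrier G" and gx: "g \<otimes> x \<otimes> inv g \<in> B" for g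
  proof -
    have "inv g \<otimes> (g \<otimes> x \<otimes> inv g) \<otimes> inv (inv g) \<in> B"
      using conj [OF inv_closed [OF g] gx] .
    then show ?thesis
      using g x by (simp add: m_assoc)
  qed
  then show "x \<notin> B \<Longrightarrow> orbit G (\<lambda>g. \<lambda>h \<in> carrier G. g \<otimes> h \<otimes> inv g) x \<inter> B = {}"
    by (auto simp: orbit_conjugation [OF x])
qed

text \<open>The class equation: \<open>B\<close> is a union of conjugacy classes, each of \<open>p\<close>-power size
  greater than one.\<close>

lemma p_group_prime_dvd_card_conj_closed:
  assumes G: "p_group p G" and p: "Factorial_Ring.prime p" and Bc: "B \<subseteq> carrier G"
    and conj: "\<And>g x. g \<in> carrier G \<Longrightarrow> x \<in> B \<Longrightarrow> g \<otimes> x \<otimes> inv g \<in> B"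
    and noncentral: "B \<inter> grp_center G = {}"
  shows "p dvd card B"
proof -
  let ?\<phi> = "\<lambda>g. \<lambda>h \<in> carrier G. g \<otimes> h \<otimes> inv g"
  interpret group_action G "carrier G" ?\<phi>
    by (rule action_by_conjugation)
  have fin: "finite (carrier G)"
    using G unfolding p_group_def by blast
  have orbit_dvd: "p dvd (\<Sum>y\<in>orb. if y \<in> B then 1 else 0)" if orb: "orb \<in> orbits G (carrier G) ?\<phi>" for orb
  proof -
    obtain x where x: "x \<in> carrier G" and ox: "orb = orbit G ?\<phi> x"
      using orb unfolding orbits_def by blast
    show ?thesis
    proof (cases "x \<in> B")
      case True
      then have "p dvd card orb"
        using p_group_prime_dvd_card_conj_orbit [OF G p x] ox noncentral by blast
      moreover have "orb \<subseteq> B"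
        using orbit_conjugation_conj_closed(1) [OF conj x True] ox by simp
      moreover have "finite orb"
        using ox orbit_conjugation [OF x] fin by simp
      ultimately show ?thesis
        by (simp add: subset_eq)
    next
      case False
      then have "orb \<inter> B = {}"
        using orbit_conjugation_conj_closed(2) [OF conj x] ox by simp
      then show ?thesis
        by (simp add: disjoint_iff)
    qed
  qed
  have "p dvd (\<Sum>orb\<in>orbits G (carrier G) ?\<phi>. \<Sum>y\<in>orb. if y \<in> B then 1 else 0)"
    using orbit_dvd by (rule dvd_sum)
  also have "\<dots> = (\<Sum>y\<in>carrier G. if y \<in> B then 1 else 0)"
    by (rule disjoint_sum [OF fin])
  also have "\<dots> = card B"
    using fin Bc by (simp add: sum.If_cases Int_absorb1)
  finally show ?thesis .
qed

lemma p_group_normal_meets_center: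
  assumes G: "p_group p G" and p: "Factorial_Ring.prime p" and A: "A \<lhd> G" and ne: "A \<noteq> {\<one>}"
  shows "\<exists>a\<in>A. a \<noteq> \<one> \<and> a \<in> grp_center G"
proof (rule ccontr)
  assume no: "\<not> ?thesis"
  have sA: "subgroup A G"
    by (rule normal_imp_subgroup [OF A])
  have Ac: "A \<subseteq> carrier G"
    by (rule subgroup.subset [OF sA])
  have "g \<otimes> x \<otimes> inv g \<in> A - {\<one>}" if g: "g \<in> carrier G" and x: "x \<in> A - {\<one>}" for g x
  proof -
    have xc: "x \<in> carrier G"
      using x Ac by blast
    have "g \<otimes> x \<otimes> inv g \<noteq> \<one>"
    proof
      assume "g \<otimes> x \<otimes> inv g = \<one>"
      then have "inv g \<otimes> (g \<otimes> x \<otimes> inv g) \<otimes> g = \<one>"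
        using g by simp
      then show False
        using g xc x by (simp add: m_assoc)
    qed
    then show ?thesis
      using normal.inv_op_closed2 [OF A g] x by blast
  qed
  moreover have "(A - {\<one>}) \<inter> grp_center G = {}"
    using no by blast
  ultimately have "p dvd card (A - {\<one>})"
    using Ac by (intro p_group_prime_dvd_card_conj_closed [OF G p]) auto
  moreover have "card A = card (A - {\<one>}) + 1"
  proof -
    have "finite A"
      using finite_subset [OF Ac] G unfolding p_group_def by blast
    then show ?thesis
      using subgroup.one_closed [OF sA] by (subst card.remove [of A \<one>]) simp_all
  qed
  moreover have "p dvd card A"
    by (rule p_group_prime_dvd_card_subgroup [OF G p sA ne])
  ultimately have "p dvd 1"
    using dvd_add_right_iff by metis
  then show False
    using p not_prime_unit by blast
qed

end

context normal
begin

lemma image_normal: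
  assumes M: "M \<lhd> G"
  shows "(\<lambda>a. H #> a) ` M \<lhd> G Mod H"
proof -
  interpret Q: group_hom G "G Mod H" "\<lambda>a. H #> a"
    by (rule quotient_group_hom)
  have sM: "subgroup M G"
    by (rule normal_imp_subgroup [OF M])
  have "q \<otimes>\<^bsub>G Mod H\<^esub> b \<otimes>\<^bsub>G Mod H\<^esub> inv\<^bsub>G Mod H\<^esub> q \<in> (\<lambda>a. H #> a) ` M"
    if q: "q \<in> carrier (G Mod H)" and b: "b \<in> (\<lambda>a. H #> a) ` M" for q b
  proof -
    obtain g where g: "g \<in> carrier G" and qg: "q = H #> g"
      using q unfolding carrier_FactGroup by blast
    obtain m where m: "m \<in> M" and bm: "b = H #> m"
      using b by blast
    have mc: "m \<in> carrier G"
      by (rule subgroup.mem_carrier [OF sM m])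
    have "q \<otimes>\<^bsub>G Mod H\<^esub> b \<otimes>\<^bsub>G Mod H\<^esub> inv\<^bsub>G Mod H\<^esub> q = H #> (g \<otimes> m \<otimes> inv g)"
      using qg bm g mc by simp
    moreover have "g \<otimes> m \<otimes> inv g \<in> M"
      by (rule normal.inv_op_closed2 [OF M g m])
    ultimately show ?thesis
      by blast
  qed
  then show ?thesis
    by (intro Q.H.normal_invI Q.subgroup_img_is_subgroup [OF sM])
qed

lemma r_coset_mem_center_iff:
  assumes a: "a \<in> carrier G"
  shows "H #> a \<in> grp_center (G Mod H) \<longleftrightarrow> a \<in> central_mod G H"
proof -
  have "H #> a \<in> grp_center (G Mod H)
      \<longleftrightarrow> (\<forall>g\<in>carrier G. (H #> a) \<otimes>\<^bsub>G Mod H\<^esub> (H #> g) = (H #> g) \<otimes>\<^bsub>G Mod H\<^esub> (H #> a))"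
    using a by (auto simp: grp_center_def carrier_FactGroup)
  also have "\<dots> \<longleftrightarrow> a \<in> central_mod G H"
    using a by (simp add: r_coset_commute_iff central_mod_def)
  finally show ?thesis .
qed

end

context group
begin

lemma p_group_exists_central_mod:
  assumes G: "p_group p G" and p: "Factorial_Ring.prime p"
    and Y: "Y \<lhd> G" and M: "M \<lhd> G" and nsub: "\<not> M \<subseteq> Y"
  shows "\<exists>s\<in>M. s \<notin> Y \<and> s \<in> central_mod G Y"
proof -
  interpret normal Y G
    by (rule Y)
  have Mc: "M \<subseteq> carrier G"
    by (rule subgroup.subset [OF normal_imp_subgroup [OF M]])
  obtain m where m: "m \<in> M" and mY: "m \<notin> Y"
    using nsub by blast
  then have "Y #> m \<noteq> \<one>\<^bsub>G Mod Y\<^esub>"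
    using Mc r_coset_eq_self_iff by (auto simp: one_FactGroup)
  then have "(\<lambda>a. Y #> a) ` M \<noteq> {\<one>\<^bsub>G Mod Y\<^esub>}"
    using m by blast
  then obtain b where b: "b \<in> (\<lambda>a. Y #> a) ` M" and b1: "b \<noteq> \<one>\<^bsub>G Mod Y\<^esub>"
    and bZ: "b \<in> grp_center (G Mod Y)"
    using group.p_group_normal_meets_center [OF factorgroup_is_group p_group_FactGroup [OF G p Y] p
        image_normal [OF M]]
    by blast
  then obtain s where s: "s \<in> M" and bs: "b = Y #> s"
    by blast
  have sc: "s \<in> carrier G"
    using s Mc by blast
  have "s \<notin> Y"
    using b1 bs r_coset_eq_self_iff [OF sc] by (auto simp: one_FactGroup)
  moreover have "s \<in> central_mod G Y"
    using bZ bs r_coset_mem_center_iff [OF sc] by simp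
  ultimately show ?thesis
    using s by blast
qed

text \<open>Induction on \<open>|G| - |Y|\<close>: elements of \<open>U\<close> central modulo \<open>Y\<close> enlarge \<open>Y\<close>.\<close>

lemma p_group_subset_mult_comm_subgroup_imp_subset:
  assumes G: "p_group p G" and p: "Factorial_Ring.prime p"
  shows "U \<lhd> G \<Longrightarrow> Y \<lhd> G \<Longrightarrow> U \<subseteq> Y <#> comm_subgroup G U \<Longrightarrow> U \<subseteq> Y"
proof (induction "card (carrier G) - card Y" arbitrary: Y rule: less_induct)
  case less
  note U = less.prems(1) and Y = less.prems(2) and UY = less.prems(3)
  have sY: "subgroup Y G"
    by (rule normal_imp_subgroup [OF Y])
  have UC: "U \<inter> central_mod G Y \<lhd> G"
    by (rule normal_subgroup_intersect [OF U central_mod_normal [OF Y]])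
  show "U \<subseteq> Y"
  proof (rule ccontr)
    assume nsub: "\<not> U \<subseteq> Y"
    obtain s where s: "s \<in> U" "s \<notin> Y" "s \<in> central_mod G Y"
      using p_group_exists_central_mod [OF G p Y U nsub] by blast
    define Y' where "Y' = Y <#> (U \<inter> central_mod G Y)"
    have Y': "Y' \<lhd> G"
      unfolding Y'_def by (rule normal_subgroup_set_mult_closed [OF Y UC])
    have YY': "Y \<subseteq> Y'"
      unfolding Y'_def by (rule subset_set_mult_left [OF normal_imp_subgroup [OF UC] subgroup.subset [OF sY]])
    have "s \<in> Y'"
      using s subset_set_mult_right [OF sY subgroup.subset [OF normal_imp_subgroup [OF UC]]]
      unfolding Y'_def by blast
    have fin: "finite (carrier G)"
      using G unfolding p_group_def by blast
    have Y'c: "Y' \<subseteq> carrier G"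
      by (rule subgroup.subset [OF normal_imp_subgroup [OF Y']])
    have "card Y < card Y'"
      using YY' \<open>s \<in> Y'\<close> s(2) finite_subset [OF Y'c fin] by (intro psubset_card_mono) auto
    moreover have "card Y' \<le> card (carrier G)"
      by (rule card_mono [OF fin Y'c])
    ultimately have "card (carrier G) - card Y' < card (carrier G) - card Y"
      by linarith
    moreover have "U \<subseteq> Y' <#> comm_subgroup G U"
      using UY mono_set_mult [OF YY' subset_refl] by blast
    ultimately have "U \<subseteq> Y'"
      using less.hyps U Y' by blast
    moreover have "Y' \<subseteq> central_mod G Y"
      using mono_set_mult [OF normal_subset_central_mod [OF Y], of "U \<inter> central_mod G Y" "central_mod G Y"]
        subgroup_mult_id [OF central_mod_subgroup [OF Y]]
      unfolding Y'_def by blast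
    ultimately have "comm_subgroup G U \<subseteq> Y"
      unfolding central_mod_def by (intro comm_subgroup_subsetI [OF sY]) blast
    then have "U \<subseteq> Y <#> Y"
      using UY mono_set_mult [OF subset_refl] by blast
    then show False
      using nsub subgroup_mult_id [OF sY] by simp
  qed
qed

end

section \<open>Quotients of quasi-powerful groups\<close>

text \<open>\<open>G\<close> stands for \<open>G/T\<close> and \<open>H\<close> for the image of \<open>G\<^sup>p Z(G)\<close> in it, where \<open>G\<close>
  is quasi-powerful and \<open>T\<close> is generated by the \<open>p\<^sup>2\<close>-th powers of elements of \<open>G\<^sup>p Z(G)\<close>.\<close>

locale quasi_powerful_quotient = normal H G for H and G (structure) +
  fixes p :: nat
  assumes p_group: "p_group p G" and prime: "Factorial_Ring.prime p" and odd: "odd p"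
    and pow_mem: "g \<in> carrier G \<Longrightarrow> g [^] p \<in> H"
    and commutator_mem: "x \<in> carrier G \<Longrightarrow> y \<in> carrier G \<Longrightarrow> commutator G x y \<in> H"
    and pow_p2_eq_one: "h \<in> H \<Longrightarrow> h [^] (p * p) = \<one>"
    and subset_pow_center: "H \<subseteq> pow_subgroup G p <#> grp_center G"
begin

abbreviation Hp :: "'a set" where
  "Hp \<equiv> generate G (pow_set G H p)"

lemma H_normal: "H \<lhd> G"
  by unfold_locales (rule coset_eq)

lemma Hp_normal: "Hp \<lhd> G"
  by (rule generate_pow_set_normal [OF H_normal])

lemma Hp_subset_carrier: "Hp \<subseteq> carrier G"
  by (rule subgroup.subset [OF normal_imp_subgroup [OF Hp_normal]])

lemma pow_mem_Hp: "h \<in> H \<Longrightarrow> h [^] p \<in> Hp"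
  unfolding pow_set_def by (rule generate.incl) blast

lemma comm_subgroup_H_subset_H: "comm_subgroup G H \<subseteq> H"
  by (rule comm_subgroup_subsetI [OF subgroup_axioms commutator_mem]) simp

lemma H_subset_central_mod:
  assumes W: "W \<lhd> G" and pow: "\<And>x. x \<in> carrier G \<Longrightarrow> x [^] p \<in> central_mod G W"
  shows "H \<subseteq> central_mod G W"
proof -
  have sC: "subgroup (central_mod G W) G"
    by (rule central_mod_subgroup [OF W])
  have "pow_subgroup G p \<subseteq> central_mod G W"
    unfolding pow_subgroup_def using pow by (intro generate_subgroup_incl [OF _ sC]) blast
  moreover have "grp_center G \<subseteq> central_mod G W"
    using subgroup.one_closed [OF normal_imp_subgroup [OF W]]
    by (auto simp: central_mod_def grp_center_closed commutator_center_left)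
  ultimately have "pow_subgroup G p <#> grp_center G \<subseteq> central_mod G W <#> central_mod G W"
    by (rule mono_set_mult)
  then show ?thesis
    using subset_pow_center subgroup_mult_id [OF sC] by blast
qed

lemma pow_mem_central_mod_Hp:
  assumes x: "x \<in> carrier G"
  shows "x [^] p \<in> central_mod G (Hp <#> comm_subgroup G (comm_subgroup G H))"
proof -
  let ?D = "comm_subgroup G H"
  let ?W = "Hp <#> comm_subgroup G ?D"
  have D: "?D \<lhd> G"
    by (rule comm_subgroup_normal [OF H_normal])
  have W: "?W \<lhd> G"
    by (rule mult_comm_subgroup_normal [OF Hp_normal D])
  have Hp_W: "Hp \<subseteq> ?W" and DD_W: "comm_subgroup G ?D \<subseteq> ?W"
    using subset_mult_comm_subgroup [OF normal_imp_subgroup [OF Hp_normal] D] by blast+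
  have "commutator G (x [^] p) g \<in> ?W" if g: "g \<in> carrier G" for g
  proof (rule normal.commutator_pow_left_mem [OF W x g refl refl _ _ odd])
    let ?c = "commutator G x g"
    let ?d = "commutator G x ?c"
    have cH: "?c \<in> H"
      by (rule commutator_mem [OF x g])
    have dD: "?d \<in> ?D"
      by (rule commutator_mem_comm_subgroup' [OF subset cH x])
    have "?D \<subseteq> carrier G"
      by (rule subgroup.subset [OF normal_imp_subgroup [OF D]])
    then show "commutator G x ?d \<in> ?W"
      using commutator_mem_comm_subgroup' [OF _ dD x] DD_W by blast
    show "commutator G ?d ?c \<in> ?W"
      using commutator_mem_comm_subgroup [OF dD] cH DD_W by (blast intro: mem_carrier)
    show "?d [^] p \<in> ?W"
      using pow_mem_Hp dD comm_subgroup_H_subset_H Hp_W by blast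
    show "?c [^] p \<in> ?W"
      using pow_mem_Hp [OF cH] Hp_W by blast
  qed
  then show ?thesis
    using x by (simp add: central_mod_def)
qed

lemma comm_subgroup_H_subset_Hp: "comm_subgroup G H \<subseteq> Hp"
proof (rule p_group_subset_mult_comm_subgroup_imp_subset [OF p_group prime comm_subgroup_normal [OF H_normal] Hp_normal])
  let ?W = "Hp <#> comm_subgroup G (comm_subgroup G H)"
  have W: "?W \<lhd> G"
    by (rule mult_comm_subgroup_normal [OF Hp_normal comm_subgroup_normal [OF H_normal]])
  have "H \<subseteq> central_mod G ?W"
    by (rule H_subset_central_mod [OF W pow_mem_central_mod_Hp])
  then show "comm_subgroup G H \<subseteq> ?W"
    unfolding central_mod_def by (intro comm_subgroup_subsetI [OF normal_imp_subgroup [OF W]]) blast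
qed

lemma pow_Hp_mem_mod:
  assumes a: "a \<in> Hp"
  shows "a [^] p \<in> grp_center G <#> comm_subgroup G (comm_subgroup G Hp)"
  using a
proof (induction rule: generate.induct)
  let ?X = "comm_subgroup G Hp"
  let ?W = "grp_center G <#> comm_subgroup G ?X"
  have X: "?X \<lhd> G"
    by (rule comm_subgroup_normal [OF Hp_normal])
  have W: "?W \<lhd> G"
    by (rule mult_comm_subgroup_normal [OF grp_center_normal X])
  have one_W: "\<one> \<in> ?W"
    by (rule subgroup.one_closed [OF normal_imp_subgroup [OF W]])
  have gen: "(h [^] p) [^] p = \<one>" if "h \<in> H" for h
    using that pow_p2_eq_one by (simp add: nat_pow_pow)
  {
    case one
    show ?case
      using one_W by simp
  next
    case (incl b)
    then show ?case
      using gen one_W unfolding pow_set_def by auto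
  next
    case (inv b)
    then obtain h where "h \<in> H" "b = h [^] p"
      by (rule pow_setE)
    then show ?case
      using gen one_W by (simp add: nat_pow_inv)
  next
    case (eng a b)
    have ac: "a \<in> carrier G" and bc: "b \<in> carrier G"
      using eng.hyps Hp_subset_carrier by blast+
    have k: "commutator G a b \<in> ?X"
      by (rule commutator_mem_comm_subgroup [OF eng.hyps(1) bc])
    have "?X \<subseteq> carrier G"
      by (rule subgroup.subset [OF normal_imp_subgroup [OF X]])
    then have "commutator G g (commutator G a b) \<in> ?W" if "g \<in> carrier G" for g
      using commutator_mem_comm_subgroup' [OF _ k that] subset_mult_comm_subgroup [OF grp_center_subgroup X]
      by blast
    then show ?case
      using ac bc eng.IH by (intro normal.pow_mult_mem [OF W ac bc _ _ odd])
  }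
qed

lemma pow_H_mem_central_mod_center:
  assumes h: "h \<in> H"
  shows "h [^] p \<in> central_mod G (grp_center G <#> comm_subgroup G (comm_subgroup G Hp))"
proof -
  let ?X = "comm_subgroup G Hp"
  let ?W = "grp_center G <#> comm_subgroup G ?X"
  have X: "?X \<lhd> G"
    by (rule comm_subgroup_normal [OF Hp_normal])
  have W: "?W \<lhd> G"
    by (rule mult_comm_subgroup_normal [OF grp_center_normal X])
  have Xc: "?X \<subseteq> carrier G"
    by (rule subgroup.subset [OF normal_imp_subgroup [OF X]])
  have XX_W: "comm_subgroup G ?X \<subseteq> ?W"
    using subset_mult_comm_subgroup [OF grp_center_subgroup X] by blast
  have hc: "h \<in> carrier G"
    using h by simp
  have "commutator G (h [^] p) g \<in> ?W" if g: "g \<in> carrier G" for g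
  proof (rule normal.commutator_pow_left_mem [OF W hc g refl refl _ _ odd])
    let ?c = "commutator G h g"
    let ?d = "commutator G h ?c"
    have cHp: "?c \<in> Hp"
      using commutator_mem_comm_subgroup [OF h g] comm_subgroup_H_subset_Hp by blast
    have cc: "?c \<in> carrier G"
      using hc g by simp
    have dX: "?d \<in> ?X"
      by (rule commutator_mem_comm_subgroup' [OF Hp_subset_carrier cHp hc])
    show "commutator G h ?d \<in> ?W"
      using commutator_mem_comm_subgroup' [OF Xc dX hc] XX_W by blast
    show "commutator G ?d ?c \<in> ?W"
      using commutator_mem_comm_subgroup [OF dX cc] XX_W by blast
    show cp: "?c [^] p \<in> ?W"
      by (rule pow_Hp_mem_mod [OF cHp])
    have "commutator G ?c ?d \<in> ?W"
      using commutator_mem_comm_subgroup' [OF Xc dX cc] XX_W by blast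
    then show "?d [^] p \<in> ?W"
      by (rule normal.commutator_pow_right_mem [OF W hc cc _ cp])
  qed
  then show ?thesis
    using hc by (simp add: central_mod_def)
qed

lemma comm_subgroup_Hp_subset_center: "comm_subgroup G Hp \<subseteq> grp_center G"
proof (rule p_group_subset_mult_comm_subgroup_imp_subset [OF p_group prime comm_subgroup_normal [OF Hp_normal] grp_center_normal])
  let ?W = "grp_center G <#> comm_subgroup G (comm_subgroup G Hp)"
  have W: "?W \<lhd> G"
    by (rule mult_comm_subgroup_normal [OF grp_center_normal comm_subgroup_normal [OF Hp_normal]])
  have "pow_set G H p \<subseteq> central_mod G ?W"
    using pow_H_mem_central_mod_center unfolding pow_set_def by blast
  then have "Hp \<subseteq> central_mod G ?W"
    by (rule generate_subgroup_incl [OF _ central_mod_subgroup [OF W]])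
  then show "comm_subgroup G Hp \<subseteq> ?W"
    unfolding central_mod_def by (intro comm_subgroup_subsetI [OF normal_imp_subgroup [OF W]]) blast
qed

lemma pow_Hp_mem_center:
  assumes a: "a \<in> Hp"
  shows "a [^] p \<in> grp_center G"
proof -
  have "comm_subgroup G (comm_subgroup G Hp) \<subseteq> grp_center G"
    using comm_subgroup_Hp_subset_center subgroup.one_closed [OF grp_center_subgroup]
    by (intro comm_subgroup_subsetI [OF grp_center_subgroup]) (auto simp: commutator_center_left)
  then have "grp_center G <#> comm_subgroup G (comm_subgroup G Hp) \<subseteq> grp_center G <#> grp_center G"
    by (rule mono_set_mult [OF subset_refl])
  then show ?thesis
    using pow_Hp_mem_mod [OF a] subgroup_mult_id [OF grp_center_subgroup] by blast
qed

lemma commutator_Hp_mem_center: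
  assumes "a \<in> Hp" "g \<in> carrier G"
  shows "commutator G a g \<in> grp_center G" "commutator G g a \<in> grp_center G"
  using commutator_mem_comm_subgroup [OF assms] commutator_mem_comm_subgroup' [OF Hp_subset_carrier assms]
    comm_subgroup_Hp_subset_center by blast+

lemma commutator_Hp_pow_eq_one:
  assumes a: "a \<in> Hp" and g: "g \<in> carrier G"
  shows "commutator G g a [^] p = \<one>" "commutator G a g [^] p = \<one>"
proof -
  have ac: "a \<in> carrier G"
    using a Hp_subset_carrier by blast
  have Z: "commutator G g a \<in> grp_center G" "commutator G a g \<in> grp_center G"
    by (rule commutator_Hp_mem_center [OF a g])+
  have "commutator G g a [^] p = commutator G g (a [^] p)"
    by (rule commutator_pow_right [OF g ac grp_center_commute [OF Z(1) ac, symmetric], symmetric])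
  then show "commutator G g a [^] p = \<one>"
    using commutator_center_right [OF pow_Hp_mem_center [OF a] g] by simp
  have "commutator G a g [^] p = commutator G (a [^] p) g"
    by (rule commutator_pow_left_commuting [OF ac g grp_center_commute [OF Z(2) ac, symmetric], symmetric])
  then show "commutator G a g [^] p = \<one>"
    using commutator_center_left [OF pow_Hp_mem_center [OF a] g] by simp
qed

lemma commutator_pow_pow_eq_one:
  assumes x: "x \<in> carrier G" and y: "y \<in> carrier G"
  shows "commutator G (x [^] p) y [^] p = \<one>"
proof -
  define c where "c = commutator G x y"
  define d where "d = commutator G x c"
  have cH: "c \<in> H"
    unfolding c_def by (rule commutator_mem [OF x y])
  have dD: "d \<in> comm_subgroup G H"
    unfolding d_def by (rule commutator_mem_comm_subgroup' [OF subset cH x])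
  have cc: "c \<in> carrier G" and dHp: "d \<in> Hp" and dH: "d \<in> H" and dc: "d \<in> carrier G"
    using cH dD comm_subgroup_H_subset_Hp comm_subgroup_H_subset_H by auto
  define E where "E = {z \<in> grp_center G. z [^] p = \<one>}"
  have E: "E \<lhd> G"
    unfolding E_def by (rule center_pow_eq_one_normal)
  have "commutator G x d \<in> E" "commutator G d c \<in> E"
    using commutator_Hp_mem_center [OF dHp] commutator_Hp_pow_eq_one [OF dHp] x cc by (simp_all add: E_def)
  then have "commutator G (x [^] p) y \<otimes> inv (d [^] (p choose 2) \<otimes> c [^] p) \<in> E"
    by (rule normal.commutator_pow_left_mod [OF E x y c_def d_def])
  then obtain \<zeta> where \<zeta>: "\<zeta> \<in> grp_center G" "\<zeta> [^] p = \<one>"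
    and eq: "commutator G (x [^] p) y = \<zeta> \<otimes> (d [^] (p choose 2) \<otimes> c [^] p)"
    unfolding E_def using x y cc dc by (force simp: m_assoc)
  let ?m = "d [^] (p choose 2) \<otimes> c [^] p"
  have mc: "?m \<in> carrier G"
    using cc dc by simp
  have dC: "d [^] (p choose 2) = (d [^] p) [^] ((p - 1) div 2)"
    using dc by (simp add: choose_two_odd [OF odd] nat_pow_pow)
  have dCZ: "d [^] (p choose 2) \<in> grp_center G"
    unfolding dC by (rule subgroup_nat_pow_closed [OF grp_center_subgroup pow_Hp_mem_center [OF dHp]])
  have "(d [^] (p choose 2)) [^] p = (d [^] (p * p)) [^] ((p - 1) div 2)"
    using dc by (simp add: dC nat_pow_pow ac_simps)
  then have "?m [^] p = \<one>"
    using dCZ dc cc pow_p2_eq_one [OF dH] pow_p2_eq_one [OF cH]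
    by (simp add: pow_mult_distrib grp_center_commute grp_center_closed nat_pow_pow)
  moreover have "(\<zeta> \<otimes> ?m) [^] p = \<zeta> [^] p \<otimes> ?m [^] p"
    by (rule pow_mult_distrib [OF grp_center_commute [OF \<zeta>(1) mc] grp_center_closed [OF \<zeta>(1)] mc])
  ultimately show ?thesis
    using \<zeta> eq mc by simp
qed

theorem pow_commute:
  assumes x: "x \<in> carrier G" and y: "y \<in> carrier G"
  shows "x [^] p \<otimes> y [^] p = y [^] p \<otimes> x [^] p"
proof -
  define f where "f = commutator G y (x [^] p)"
  define \<delta> where "\<delta> = commutator G y f"
  have xpc: "x [^] p \<in> carrier G"
    using x by simp
  have fHp: "f \<in> Hp"
    unfolding f_def using commutator_mem_comm_subgroup' [OF subset pow_mem [OF x] y] comm_subgroup_H_subset_Hp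
    by blast
  have fc: "f \<in> carrier G"
    using fHp Hp_subset_carrier by blast
  have \<delta>Z: "\<delta> \<in> grp_center G"
    unfolding \<delta>_def by (rule commutator_Hp_mem_center [OF fHp y])
  have "f = inv (commutator G (x [^] p) y)"
    using inv_commutator [OF xpc y] by (simp add: f_def)
  then have "f [^] p = inv (commutator G (x [^] p) y [^] p)"
    using xpc y by (simp add: nat_pow_inv)
  then have fp: "f [^] p = \<one>"
    by (simp add: commutator_pow_pow_eq_one [OF x y])
  have "\<delta> [^] (p choose 2) = (\<delta> [^] p) [^] ((p - 1) div 2)"
    using \<delta>Z by (simp add: choose_two_odd [OF odd] nat_pow_pow grp_center_closed)
  then have \<delta>C: "\<delta> [^] (p choose 2) = \<one>"
    unfolding \<delta>_def by (simp add: commutator_Hp_pow_eq_one [OF fHp y])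
  have "commutator G (y [^] p) (x [^] p) = \<delta> [^] (p choose 2) \<otimes> f [^] p"
    by (rule commutator_pow_left [OF y xpc f_def \<delta>_def grp_center_commute [OF \<delta>Z y, symmetric]
          grp_center_commute [OF \<delta>Z fc]])
  then have "commutator G (y [^] p) (x [^] p) = \<one>"
    using \<delta>C fp by simp
  then show ?thesis
    using commutator_eq_one_iff x y by simp
qed

end

context normal
begin

lemma r_coset_mem_image_imp_mem:
  assumes K: "subgroup K G" and HK: "H \<subseteq> K" and a: "a \<in> carrier G"
    and img: "H #> a \<in> (\<lambda>b. H #> b) ` K"
  shows "a \<in> K"
proof -
  obtain b where b: "b \<in> K" and eq: "H #> a = H #> b"
    using img by blast
  have bc: "b \<in> carrier G"
    by (rule subgroup.mem_carrier [OF K b])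
  have "a \<otimes> inv b \<in> K"
    using r_coset_eq_imp_mult_inv_mem [OF a bc eq] HK by blast
  then have "a \<otimes> inv b \<otimes> b \<in> K"
    using b by (rule subgroup.m_closed [OF K])
  then show ?thesis
    using a bc by (simp add: m_assoc)
qed

lemma image_pow_subgroup: "(\<lambda>a. H #> a) ` pow_subgroup G n = pow_subgroup (G Mod H) n"
proof -
  interpret Q: group_hom G "G Mod H" "\<lambda>a. H #> a"
    by (rule quotient_group_hom)
  have "(\<lambda>a. H #> a) ` pow_set G (carrier G) n = (\<lambda>g. H #> g [^] n) ` carrier G"
    by (simp add: pow_set_eq_image image_image)
  also have "\<dots> = (\<lambda>g. (H #> g) [^]\<^bsub>G Mod H\<^esub> n) ` carrier G"
    by (rule image_cong) (simp_all add: Q.hom_nat_pow)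
  also have "\<dots> = pow_set (G Mod H) (carrier (G Mod H)) n"
    by (simp add: pow_set_eq_image carrier_FactGroup image_image)
  finally show ?thesis
    unfolding pow_subgroup_eq_generate_pow_set
    by (simp add: Q.generate_img [symmetric] pow_set_eq_image image_subset_iff)
qed

lemma r_coset_pow_subgroup: "a \<in> pow_subgroup G n \<Longrightarrow> H #> a \<in> pow_subgroup (G Mod H) n"
  using image_pow_subgroup by blast

lemma r_coset_grp_center:
  assumes z: "z \<in> grp_center G"
  shows "H #> z \<in> grp_center (G Mod H)"
  using z r_coset_mem_center_iff [OF grp_center_closed [OF z]]
    subgroup.one_closed [OF subgroup_axioms]
  by (simp add: central_mod_def commutator_center_left grp_center_closed)

lemma image_pow_subgroup_mult_center:
  "(\<lambda>a. H #> a) ` (pow_subgroup G n <#> grp_center G)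
    \<subseteq> pow_subgroup (G Mod H) n <#>\<^bsub>G Mod H\<^esub> grp_center (G Mod H)"
proof
  fix q
  assume "q \<in> (\<lambda>a. H #> a) ` (pow_subgroup G n <#> grp_center G)"
  then obtain a z where a: "a \<in> pow_subgroup G n" and z: "z \<in> grp_center G" and q: "q = H #> (a \<otimes> z)"
    unfolding set_mult_def by blast
  have "a \<in> carrier G"
    using a subgroup.subset [OF normal_imp_subgroup [OF pow_subgroup_normal]] by blast
  then have "q = (H #> a) \<otimes>\<^bsub>G Mod H\<^esub> (H #> z)"
    using q grp_center_closed [OF z] by (simp add: group_hom.hom_mult [OF quotient_group_hom])
  then show "q \<in> pow_subgroup (G Mod H) n <#>\<^bsub>G Mod H\<^esub> grp_center (G Mod H)"
    using r_coset_pow_subgroup [OF a] r_coset_grp_center [OF z] unfolding set_mult_def by blast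
qed
end

context group
begin

lemma pow_subgroup_subgroup:
  assumes H: "subgroup H G"
  shows "pow_subgroup (G\<lparr>carrier := H\<rparr>) n = generate G (pow_set G H n)"
proof -
  have "pow_set G H n \<subseteq> H"
    using subgroup_nat_pow_closed [OF H] by (auto simp: pow_set_def)
  moreover have "{h [^]\<^bsub>G\<lparr>carrier := H\<rparr>\<^esub> n | h. h \<in> carrier (G\<lparr>carrier := H\<rparr>)} = pow_set G H n"
    by (simp add: pow_set_def nat_pow_consistent [symmetric])
  ultimately show ?thesis
    unfolding pow_subgroup_def using generate_consistent [OF _ H] by simp
qed

lemma derived_subgroup_subsetI:
  assumes H: "subgroup H G" and K: "subgroup K G" and KH: "K \<subseteq> H"
    and comm: "\<And>u v. u \<in> H \<Longrightarrow> v \<in> H \<Longrightarrow> commutator G u v \<in> K"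
  shows "derived (G\<lparr>carrier := H\<rparr>) (carrier (G\<lparr>carrier := H\<rparr>)) \<subseteq> K"
  unfolding derived_def
proof (rule group.generate_subgroup_incl [OF subgroup_imp_group [OF H]])
  show "subgroup K (G\<lparr>carrier := H\<rparr>)"
    by (rule subgroup_incl [OF K H KH])
  show "derived_set (G\<lparr>carrier := H\<rparr>) (carrier (G\<lparr>carrier := H\<rparr>)) \<subseteq> K"
    using comm H by (auto simp: commutator_def)
qed

lemma quasi_powerful_commutator_mem:
  assumes qp: "quasi_powerful p G" and x: "x \<in> carrier G" and y: "y \<in> carrier G"
  shows "commutator G x y \<in> pow_subgroup G p <#> grp_center G"
proof -
  let ?Z = "grp_center G"
  let ?Q = "G Mod ?Z"
  interpret normal ?Z G
    by (rule grp_center_normal)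
  have ZH: "?Z \<subseteq> pow_subgroup G p <#> ?Z"
    by (rule subset_set_mult_right [OF normal_imp_subgroup [OF pow_subgroup_normal]
          subgroup.subset [OF grp_center_subgroup]])
  have "?Z #> x \<in> carrier ?Q" "?Z #> y \<in> carrier ?Q"
    using x y unfolding carrier_FactGroup by blast+
  then have "commutator ?Q (?Z #> x) (?Z #> y) \<in> derived_set ?Q (carrier ?Q)"
    unfolding commutator_def by blast
  then have "?Z #> commutator G x y \<in> derived ?Q (carrier ?Q)"
    unfolding derived_def r_coset_commutator [OF x y] by (rule generate.incl)
  then have "?Z #> commutator G x y \<in> (\<lambda>a. ?Z #> a) ` pow_subgroup G p"
    using qp unfolding quasi_powerful_def powerful_def image_pow_subgroup by blast
  then have "?Z #> commutator G x y \<in> (\<lambda>a. ?Z #> a) ` (pow_subgroup G p <#> ?Z)"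
    using pow_subgroup_subset_mult_center by blast
  then show ?thesis
    by (rule r_coset_mem_image_imp_mem [OF normal_imp_subgroup [OF pow_subgroup_mult_center_normal]
          ZH commutator_closed [OF x y]])
qed

end

context group
begin

lemma quasi_powerful_quotient_FactGroup:
  assumes G: "p_group p G" and p: "Factorial_Ring.prime p" and odd: "odd p" and qp: "quasi_powerful p G"
    and H_def: "H = pow_subgroup G p <#> grp_center G"
    and T_def: "T = generate G (pow_set G H (p * p))"
  shows "quasi_powerful_quotient ((\<lambda>a. T #> a) ` H) (G Mod T) p"
proof -
  have nH: "H \<lhd> G"
    unfolding H_def by (rule pow_subgroup_mult_center_normal)
  have nT: "T \<lhd> G"
    unfolding T_def by (rule generate_pow_set_normal [OF nH])
  interpret normal T G
    by (rule nT)
  interpret Q: group_hom G "G Mod T" "\<lambda>a. T #> a"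
    by (rule quotient_group_hom)
  have Hc: "H \<subseteq> carrier G"
    by (rule subgroup.subset [OF normal_imp_subgroup [OF nH]])
  have pow_H: "g [^] p \<in> H" if "g \<in> carrier G" for g
    using pow_mem_pow_subgroup [OF that] pow_subgroup_subset_mult_center unfolding H_def by blast
  show ?thesis
  proof (intro quasi_powerful_quotient.intro quasi_powerful_quotient_axioms.intro)
    show "(\<lambda>a. T #> a) ` H \<lhd> G Mod T"
      by (rule image_normal [OF nH])
    show "p_group p (G Mod T)"
      by (rule p_group_FactGroup [OF G p nT])
    show "Factorial_Ring.prime p" "odd p"
      by (fact p odd)+
  next
    fix q
    assume "q \<in> carrier (G Mod T)"
    then obtain g where g: "g \<in> carrier G" and q: "q = T #> g"
      unfolding carrier_FactGroup by blast
    then have "q [^]\<^bsub>G Mod T\<^esub> p = T #> g [^] p"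
      by (simp add: Q.hom_nat_pow)
    then show "q [^]\<^bsub>G Mod T\<^esub> p \<in> (\<lambda>a. T #> a) ` H"
      using pow_H [OF g] by blast
  next
    fix q1 q2
    assume "q1 \<in> carrier (G Mod T)" "q2 \<in> carrier (G Mod T)"
    then obtain x y where x: "x \<in> carrier G" and y: "y \<in> carrier G"
      and q: "q1 = T #> x" "q2 = T #> y"
      unfolding carrier_FactGroup by blast
    then have "commutator (G Mod T) q1 q2 = T #> commutator G x y"
      by (simp add: r_coset_commutator)
    then show "commutator (G Mod T) q1 q2 \<in> (\<lambda>a. T #> a) ` H"
      using quasi_powerful_commutator_mem [OF qp x y] unfolding H_def by blast
  next
    fix q
    assume "q \<in> (\<lambda>a. T #> a) ` H"
    then obtain h where h: "h \<in> H" and q: "q = T #> h"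
      by blast
    have "h [^] (p * p) \<in> T"
      unfolding T_def pow_set_def using h by (blast intro: generate.incl)
    then show "q [^]\<^bsub>G Mod T\<^esub> (p * p) = \<one>\<^bsub>G Mod T\<^esub>"
      using r_coset_pow_eq_one_iff h Hc q by blast
  next
    show "(\<lambda>a. T #> a) ` H \<subseteq> pow_subgroup (G Mod T) p <#>\<^bsub>G Mod T\<^esub> grp_center (G Mod T)"
      unfolding H_def by (rule image_pow_subgroup_mult_center)
  qed
qed

lemma quasi_powerful_commutator_pow_subgroup_mem:
  assumes G: "p_group p G" and p: "Factorial_Ring.prime p" and odd: "odd p" and qp: "quasi_powerful p G"
    and H_def: "H = pow_subgroup G p <#> grp_center G"
    and T_def: "T = generate G (pow_set G H (p * p))"
    and n: "n \<in> pow_subgroup G p" and m: "m \<in> pow_subgroup G p"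
  shows "commutator G n m \<in> T"
proof -
  interpret R: quasi_powerful_quotient "(\<lambda>a. T #> a) ` H" "G Mod T" p
    by (rule quasi_powerful_quotient_FactGroup [OF G p odd qp H_def T_def])
  have nT: "T \<lhd> G"
    unfolding T_def H_def by (rule generate_pow_set_normal [OF pow_subgroup_mult_center_normal])
  interpret normal T G
    by (rule nT)
  have gen_comm: "a \<otimes>\<^bsub>G Mod T\<^esub> b = b \<otimes>\<^bsub>G Mod T\<^esub> a"
    if aS: "a \<in> pow_set (G Mod T) (carrier (G Mod T)) p" and bS: "b \<in> pow_set (G Mod T) (carrier (G Mod T)) p"
    for a b
  proof -
    obtain x where x: "x \<in> carrier (G Mod T)" and a: "a = x [^]\<^bsub>G Mod T\<^esub> p"
      using aS by (rule pow_setE)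
    obtain y where y: "y \<in> carrier (G Mod T)" and b: "b = y [^]\<^bsub>G Mod T\<^esub> p"
      using bS by (rule pow_setE)
    show ?thesis
      unfolding a b by (rule R.pow_commute [OF x y])
  qed
  have "pow_set (G Mod T) (carrier (G Mod T)) p \<subseteq> carrier (G Mod T)"
    by (auto simp: pow_set_def)
  then have "(T #> n) \<otimes>\<^bsub>G Mod T\<^esub> (T #> m) = (T #> m) \<otimes>\<^bsub>G Mod T\<^esub> (T #> n)"
    using gen_comm r_coset_pow_subgroup [OF n] r_coset_pow_subgroup [OF m]
    unfolding pow_subgroup_eq_generate_pow_set by (rule R.generate_commute)
  moreover have "n \<in> carrier G" "m \<in> carrier G"
    using n m subgroup.subset [OF normal_imp_subgroup [OF pow_subgroup_normal]] by blast+
  ultimately show ?thesis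
    by (simp add: r_coset_commute_iff)
qed

lemma quasi_powerful_commutator_mem_pow:
  assumes G: "p_group p G" and p: "Factorial_Ring.prime p" and odd: "odd p" and qp: "quasi_powerful p G"
    and H_def: "H = pow_subgroup G p <#> grp_center G"
    and T_def: "T = generate G (pow_set G H (p * p))"
    and u: "u \<in> H" and v: "v \<in> H"
  shows "commutator G u v \<in> T"
proof -
  have Nc: "pow_subgroup G p \<subseteq> carrier G"
    by (rule subgroup.subset [OF normal_imp_subgroup [OF pow_subgroup_normal]])
  obtain n z where n: "n \<in> pow_subgroup G p" and z: "z \<in> grp_center G" and u_eq: "u = n \<otimes> z"
    using u unfolding H_def set_mult_def by blast
  obtain m z' where m: "m \<in> pow_subgroup G p" and z': "z' \<in> grp_center G" and v_eq: "v = m \<otimes> z'"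
    using v unfolding H_def set_mult_def by blast
  have nc: "n \<in> carrier G" and mc: "m \<in> carrier G"
    using n m Nc by blast+
  have vc: "v \<in> carrier G"
    using v_eq mc z' by (simp add: grp_center_closed)
  have "commutator G u v = inv (commutator G v n)"
    using u_eq commutator_mult_center_left [OF nc z vc] inv_commutator [OF vc nc] by simp
  also have "commutator G v n = commutator G m n"
    using v_eq commutator_mult_center_left [OF mc z' nc] by simp
  also have "inv (commutator G m n) = commutator G n m"
    by (rule inv_commutator [OF mc nc])
  finally show ?thesis
    using quasi_powerful_commutator_pow_subgroup_mem [OF G p odd qp H_def T_def n m] by simp
qed

end

theorem proposition8p3:
  fixes G :: "('a, 'b) monoid_scheme" and p :: nat
  assumes "Factorial_Ring.prime p" and "odd p"
    and "p_group p G"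
    and "quasi_powerful p G"
  shows "strongly_powerful p
           (G\<lparr>carrier := pow_subgroup G p <#>\<^bsub>G\<^esub> grp_center G\<rparr>)"
proof -
  interpret group G
    using assms(3) by (simp add: p_group_def)
  define H where "H = pow_subgroup G p <#>\<^bsub>G\<^esub> grp_center G"
  define T where "T = generate G (pow_set G H (p * p))"
  have nH: "H \<lhd> G"
    unfolding H_def by (rule pow_subgroup_mult_center_normal)
  have sH: "subgroup H G" and sT: "subgroup T G"
    unfolding T_def using nH generate_pow_set_normal [OF nH] by (simp_all add: normal_imp_subgroup)
  have TH: "T \<subseteq> H"
    unfolding T_def pow_set_def using subgroup_nat_pow_closed [OF sH]
    by (intro generate_subgroup_incl [OF _ sH]) blast
  have "derived (G\<lparr>carrier := H\<rparr>) (carrier (G\<lparr>carrier := H\<rparr>)) \<subseteq> T"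
    using quasi_powerful_commutator_mem_pow [OF assms(3,1,2,4) H_def T_def]
    by (rule derived_subgroup_subsetI [OF sH sT TH])
  also have "T = pow_subgroup (G\<lparr>carrier := H\<rparr>) (p ^ 2)"
    by (simp add: pow_subgroup_subgroup [OF sH] T_def power2_eq_square)
  finally show ?thesis
    unfolding strongly_powerful_def H_def .
qed

end
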